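(* Let $M$ be a finite abelian group of even order and exponent greater than $2$, written as $M=C_{2i_1}\times\cdots\times C_{2i_s}\times M_1$ with $|M_1|$ odd, $s\geq 1$, $i_j\geq1$. Let $H=\{x\in M: x^2=1\}$, $\mathcal{A}=\{F^+_{(f',f'',1,1)}: f'\in\mathrm{Aut}(K), f''\in\mathrm{Aut}(M)\}$ and $\mathcal{B}=\{F^+_{(I_K,I_M,x,y)}: x,y\in H\}$. Then (a) $\mathcal{B}\cong H\times H\cong C_2^{2s}$; (b) $\mathcal{B}$ is a normal subgroup of $\mathrm{Aut}(L_M)$; (c) $\mathrm{Aut}(L_M)/\mathcal{B}\cong\mathcal{A}$.
   Context: $C_n$ denotes the cyclic group of order $n$. Let $K=\{1,a,b,c\}$ be the Klein four-group. Set $L_M=K\times M$ with the operation $(A,x)*(B,y)=(AB,xy)$ if $B=1$, and $(A,x)*(B,y)=(AB,x^{-1}y)$ if $B\neq 1$. For $u,v\in M$ with $u^2=v^2=1$, $\alpha_{(u,v)}:K\to M$ is defined by $\alpha_{(u,v)}(1)=1$, $\alpha_{(u,v)}(a)=u$, $\alpha_{(u,v)}(b)=v$, $\alpha_{(u,v)}(c)=uv$. For $f'\in\mathrm{Aut}(K)$, $f''\in\mathrm{Aut}(M)$ define $F^+_{(f',f'',u,v)}(A,x)=(f'(A),f''(x)\alpha_{(u,v)}(A))$. $I_K$, $I_M$ are the identity maps of $K$, $M$. $\mathcal{A}$ and $\mathcal{B}$ are subgroups of $\mathrm{Aut}(L_M)$ under composition. *)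

theory Defs
  imports "HOL-Algebra.Algebra"
begin

datatype klein = K1 | Ka | Kb | Kc

fun klein_mult :: "klein \<Rightarrow> klein \<Rightarrow> klein" where
  "klein_mult K1 y = y"
| "klein_mult x K1 = x"
| "klein_mult Ka Ka = K1" | "klein_mult Kb Kb = K1" | "klein_mult Kc Kc = K1"
| "klein_mult Ka Kb = Kc" | "klein_mult Kb Ka = Kc"
| "klein_mult Ka Kc = Kb" | "klein_mult Kc Ka = Kb"
| "klein_mult Kb Kc = Ka" | "klein_mult Kc Kb = Ka"

definition Klein :: "klein monoid" where
  "Klein = \<lparr>carrier = UNIV, Group.monoid.mult = klein_mult, Group.monoid.one = K1\<rparr>"

definition L_grp :: "('a, 'b) monoid_scheme \<Rightarrow> (klein \<times> 'a) monoid" where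
  "L_grp M = \<lparr>carrier = carrier Klein \<times> carrier M,
     Group.monoid.mult = (\<lambda>(A, x) (B, y). (A \<otimes>\<^bsub>Klein\<^esub> B,
               (if B = K1 then x \<otimes>\<^bsub>M\<^esub> y else inv\<^bsub>M\<^esub> x \<otimes>\<^bsub>M\<^esub> y))),
     Group.monoid.one = (K1, \<one>\<^bsub>M\<^esub>)\<rparr>"

fun alpha :: "('a, 'b) monoid_scheme \<Rightarrow> 'a \<Rightarrow> 'a \<Rightarrow> klein \<Rightarrow> 'a" where
  "alpha M u v K1 = \<one>\<^bsub>M\<^esub>"
| "alpha M u v Ka = u"
| "alpha M u v Kb = v"
| "alpha M u v Kc = u \<otimes>\<^bsub>M\<^esub> v"

text \<open>F^+_(f',f'',u,v)(A,x) = (f'(A), f''(x) alpha_(u,v)(A)), as an (extensional)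
  map on the carrier of L_M, so that it can be an element of AutoGroup (L_grp M).\<close>
definition Fplus :: "('a, 'b) monoid_scheme \<Rightarrow> (klein \<Rightarrow> klein) \<Rightarrow> ('a \<Rightarrow> 'a) \<Rightarrow> 'a \<Rightarrow> 'a
    \<Rightarrow> (klein \<times> 'a \<Rightarrow> klein \<times> 'a)" where
  "Fplus M f' f'' u v = (\<lambda>p \<in> carrier (L_grp M).
      (f' (fst p), f'' (snd p) \<otimes>\<^bsub>M\<^esub> alpha M u v (fst p)))"

definition exponent :: "('a, 'b) monoid_scheme \<Rightarrow> nat" where
  "exponent M = Lcm (group.ord M ` carrier M)"

end

theory Submission
  imports Defs
begin

text \<open>
  An automorphism phi of the loop L_M fixes the identity and preserves involutions.
  Every (A, x) with A \<noteq> 1 is an involution, while, since M has exponent > 2, some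
  (1, m) is not; as phi(1, x) commutes with phi(1, m), phi maps 1 \<times> M to itself.
  Writing (A, x) = (A, 1) (1, x) then gives phi = F+(f', f'', u, v), where f' and f''
  are the automorphisms induced on K and M, and A \<mapsto> snd (phi (A, 1)) satisfies a
  twisted cocycle identity forcing it to be alpha(u, v) with u, v \<in> H. Forgetting
  (u, v) is a homomorphism from Aut(L_M) onto \<A> with kernel \<B>, which gives (b) and
  (c), and (u, v) \<mapsto> F+(I_K, I_M, u, v) is an isomorphism H \<times> H \<cong> \<B>. Finally H is
  the 2-torsion of C(2 i_1) \<times> ... \<times> C(2 i_s) \<times> M_1, that is
  {0, i_1} \<times> ... \<times> {0, i_s} \<times> 1 \<cong> C_2^s, because |M_1| is odd.
\<close>

lemma UNIV_klein: "(UNIV :: klein set) = {K1, Ka, Kb, Kc}"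
  by (auto intro: klein.exhaust)

instance klein :: finite
  by standard (simp add: UNIV_klein)

lemma klein_mult_self [simp]: "klein_mult A A = K1"
  by (cases A) auto

lemma klein_mult_K1_right [simp]: "klein_mult A K1 = A"
  by (cases A) auto

lemma carrier_Klein [simp]: "carrier Klein = UNIV"
  and mult_Klein [simp]: "x \<otimes>\<^bsub>Klein\<^esub> y = klein_mult x y"
  and one_Klein [simp]: "\<one>\<^bsub>Klein\<^esub> = K1"
  by (simp_all add: Klein_def)

lemma id_in_auto_Klein: "id \<in> auto Klein"
  by (simp add: auto_def hom_def Bij_def)

lemma auto_Klein_K1_iff:
  assumes "f \<in> auto Klein"
  shows "f A = K1 \<longleftrightarrow> A = K1"
proof -
  have "f (klein_mult x y) = klein_mult (f x) (f y)" for x y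
    using assms by (auto simp: auto_def hom_def)
  from this[of K1 K1] have "f K1 = K1"
    by simp
  moreover have "inj f"
    using assms by (auto simp: auto_def Bij_def bij_betw_def)
  ultimately show ?thesis
    by (metis injD)
qed

section \<open>Two-torsion\<close>

definition two_torsion :: "('a, 'b) monoid_scheme \<Rightarrow> 'a set" where
  "two_torsion G = {x \<in> carrier G. x \<otimes>\<^bsub>G\<^esub> x = \<one>\<^bsub>G\<^esub>}"

lemma (in comm_group) subgroup_two_torsion: "subgroup (two_torsion G) G"
proof (rule subgroupI)
  fix x y assume "x \<in> two_torsion G" "y \<in> two_torsion G"
  then show "x \<otimes> y \<in> two_torsion G"
    by (simp add: two_torsion_def m_assoc m_lcomm[of y x] flip: m_assoc[of x x])
qed (auto simp: two_torsion_def inv_mult_group [symmetric])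

lemma (in comm_group) group_two_torsion: "group (G\<lparr>carrier := two_torsion G\<rparr>)"
  by (rule subgroup.subgroup_is_group[OF subgroup_two_torsion is_group])

lemma (in comm_group) inv_two_torsion: "x \<in> two_torsion G \<Longrightarrow> inv x = x"
  by (simp add: two_torsion_def inv_equality)

lemma (in group) iso_two_torsion:
  assumes h: "h \<in> iso G G'" and "group G'"
  shows "G\<lparr>carrier := two_torsion G\<rparr> \<cong> G'\<lparr>carrier := two_torsion G'\<rparr>"
proof -
  interpret h: group_hom G G' h
    using h \<open>group G'\<close> by (simp add: group_hom_def group_hom_axioms_def iso_def is_group)
  have inj: "inj_on h (carrier G)" and surj: "h ` carrier G = carrier G'"
    using h by (auto simp: iso_def bij_betw_def)
  have sq: "h x \<otimes>\<^bsub>G'\<^esub> h x = \<one>\<^bsub>G'\<^esub> \<longleftrightarrow> x \<otimes> x = \<one>" if "x \<in> carrier G" for x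
    using that inj by (metis h.hom_mult h.hom_one inj_on_eq_iff m_closed one_closed)
  have "h ` two_torsion G = two_torsion G'"
  proof
    show "two_torsion G' \<subseteq> h ` two_torsion G"
    proof
      fix y assume y: "y \<in> two_torsion G'"
      then obtain x where "x \<in> carrier G" "y = h x"
        using surj by (auto simp: two_torsion_def)
      with y sq show "y \<in> h ` two_torsion G"
        by (auto simp: two_torsion_def)
    qed
  qed (use sq in \<open>auto simp: two_torsion_def\<close>)
  then have "h \<in> iso (G\<lparr>carrier := two_torsion G\<rparr>) (G'\<lparr>carrier := two_torsion G'\<rparr>)"
    using inj by (auto simp: iso_def hom_def bij_betw_def two_torsion_def inj_on_subset)
  then show ?thesis
    by (rule is_isoI)
qed

lemma two_torsion_DirProd:
  "(G \<times>\<times> H)\<lparr>carrier := two_torsion (G \<times>\<times> H)\<rparr>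
     = G\<lparr>carrier := two_torsion G\<rparr> \<times>\<times> H\<lparr>carrier := two_torsion H\<rparr>"
  by (auto simp: DirProd_def two_torsion_def)

lemma two_torsion_product_group:
  "(product_group I G)\<lparr>carrier := two_torsion (product_group I G)\<rparr>
     = product_group I (\<lambda>i. (G i)\<lparr>carrier := two_torsion (G i)\<rparr>)"
proof -
  have "two_torsion (product_group I G) = (\<Pi>\<^sub>E i\<in>I. two_torsion (G i))"
    by (auto simp: two_torsion_def PiE_iff fun_eq_iff extensional_def)
  then show ?thesis
    by (simp add: product_group_def)
qed

lemma (in group) two_torsion_odd_order:
  assumes "odd (order G)"
  shows "two_torsion G = {\<one>}"
proof -
  have "x = \<one>" if x: "x \<in> carrier G" and "x \<otimes> x = \<one>" for x
  proof -
    have "ord x dvd 2"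
      using that pow_eq_id[OF x, of 2] by (simp add: numeral_2_eq_2)
    moreover have "odd (ord x)"
      using ord_dvd_group_order[OF x] assms by (metis dvd_trans)
    ultimately have "ord x = 1"
      using prime_nat_iff[of 2] by auto
    then show ?thesis
      using ord_eq_1 x by blast
  qed
  then show ?thesis
    by (auto simp: two_torsion_def)
qed

lemma (in group) two_torsion_ne_carrier:
  assumes "exponent G > 2"
  shows "two_torsion G \<noteq> carrier G"
proof
  assume "two_torsion G = carrier G"
  then have "ord x dvd 2" if "x \<in> carrier G" for x
    using that by (auto simp: two_torsion_def numeral_2_eq_2 simp flip: pow_eq_id)
  then have "exponent G dvd 2"
    by (auto simp: exponent_def intro: Lcm_least)
  with assms show False
    by (simp add: nat_dvd_not_less)
qed

lemma fst_iso_DirProd_trivial: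
  assumes "carrier H = {\<one>\<^bsub>H\<^esub>}"
  shows "fst \<in> iso (G \<times>\<times> H) G"
  using assms by (auto simp: iso_def hom_def bij_betw_def inj_on_def image_iff)

lemma two_torsion_integer_mod_group:
  assumes "n \<ge> 1"
  shows "two_torsion (integer_mod_group (2 * n)) = {0, int n}"
proof -
  have "int n dvd a \<longleftrightarrow> a = 0 \<or> a = int n"
    if "0 \<le> a" "a < 2 * int n" for a
  proof
    assume "int n dvd a"
    then obtain k where "a = int n * k"
      by (auto elim: dvdE)
    have n: "int n > 0"
      using assms by simp
    have "0 \<le> k"
      using \<open>a = int n * k\<close> that(1) n by (simp add: zero_le_mult_iff)
    moreover have "k < 2"
      using \<open>a = int n * k\<close> that(2) mult_less_cancel_left_pos[OF n, of k 2] by simp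
    ultimately have "k = 0 \<or> k = 1"
      by auto
    then show "a = 0 \<or> a = int n"
      using \<open>a = int n * k\<close> by auto
  qed auto
  with assms show ?thesis
    by (auto simp: two_torsion_def carrier_integer_mod_group mod_eq_0_iff_dvd)
qed

lemma iso_integer_mod_group_2_two_torsion:
  assumes "n \<ge> 1"
  shows "integer_mod_group 2 \<cong>
           (integer_mod_group (2 * n))\<lparr>carrier := two_torsion (integer_mod_group (2 * n))\<rparr>"
proof -
  have "(\<lambda>k. k * int n) \<in> iso (integer_mod_group 2)
          ((integer_mod_group (2 * n))\<lparr>carrier := {0, int n}\<rparr>)"
  proof (rule isoI)
    show "(\<lambda>k. k * int n) \<in> hom (integer_mod_group 2)
            ((integer_mod_group (2 * n))\<lparr>carrier := {0, int n}\<rparr>)"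
      by (rule homI) (auto simp: carrier_integer_mod_group mod_mult_mult2 simp flip: distrib_right)
    show "bij_betw (\<lambda>k. k * int n) (carrier (integer_mod_group 2))
            (carrier ((integer_mod_group (2 * n))\<lparr>carrier := {0, int n}\<rparr>))"
      using assms by (auto simp: bij_betw_def inj_on_def carrier_integer_mod_group image_iff)
  qed
  then show ?thesis
    using two_torsion_integer_mod_group[OF assms] by (simp add: is_isoI)
qed

lemma iso_product_group_lessThan_add:
  fixes m n :: nat and G :: "('a, 'b) monoid_scheme"
  shows
  "product_group {..<m} (\<lambda>_. G) \<times>\<times> product_group {..<n} (\<lambda>_. G)
     \<cong> product_group {..<m + n} (\<lambda>_. G)"
proof -
  define join :: "(nat \<Rightarrow> 'a) \<times> (nat \<Rightarrow> 'a) \<Rightarrow> nat \<Rightarrow> 'a" where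
    "join = (\<lambda>(a, b). \<lambda>j\<in>{..<m + n}. if j < m then a j else b (j - m))"
  define cut :: "(nat \<Rightarrow> 'a) \<Rightarrow> (nat \<Rightarrow> 'a) \<times> (nat \<Rightarrow> 'a)" where
    "cut = (\<lambda>t. (\<lambda>j\<in>{..<m}. t j, \<lambda>j\<in>{..<n}. t (m + j)))"
  have "join \<in> iso (product_group {..<m} (\<lambda>_. G) \<times>\<times> product_group {..<n} (\<lambda>_. G))
                 (product_group {..<m + n} (\<lambda>_. G))"
  proof (rule isoI)
    show "join \<in> hom (product_group {..<m} (\<lambda>_. G) \<times>\<times> product_group {..<n} (\<lambda>_. G))
                 (product_group {..<m + n} (\<lambda>_. G))"
      by (rule homI) (auto simp: join_def PiE_iff fun_eq_iff)
    show "bij_betw join (carrier (product_group {..<m} (\<lambda>_. G) \<times>\<times> product_group {..<n} (\<lambda>_. G)))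
                 (carrier (product_group {..<m + n} (\<lambda>_. G)))"
    proof (rule bij_betw_byWitness[where f' = cut])
      show "\<forall>p \<in> carrier (product_group {..<m} (\<lambda>_. G) \<times>\<times> product_group {..<n} (\<lambda>_. G)).
              cut (join p) = p"
        by (auto simp: join_def cut_def PiE_iff fun_eq_iff extensional_def)
      show "\<forall>t \<in> carrier (product_group {..<m + n} (\<lambda>_. G)). join (cut t) = t"
        by (auto simp: join_def cut_def PiE_iff fun_eq_iff extensional_def)
      show "join ` carrier (product_group {..<m} (\<lambda>_. G) \<times>\<times> product_group {..<n} (\<lambda>_. G))
              \<subseteq> carrier (product_group {..<m + n} (\<lambda>_. G))"
        by (auto simp: join_def PiE_iff)
      show "cut ` carrier (product_group {..<m + n} (\<lambda>_. G))
              \<subseteq> carrier (product_group {..<m} (\<lambda>_. G) \<times>\<times> product_group {..<n} (\<lambda>_. G))"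
      proof (rule image_subsetI)
        fix t assume "t \<in> carrier (product_group {..<m + n} (\<lambda>_. G))"
        then have "t j \<in> carrier G" if "j < m + n" for j
          using that by (auto simp: PiE_iff)
        then show "cut t \<in> carrier (product_group {..<m} (\<lambda>_. G) \<times>\<times> product_group {..<n} (\<lambda>_. G))"
          by (simp add: cut_def)
      qed
    qed
  qed
  then show ?thesis
    by (rule is_isoI)
qed

lemma iso_two_torsion_cyclic_decomposition:
  fixes M1 :: "('a, 'b) monoid_scheme" and s :: nat and i :: "nat \<Rightarrow> nat"
  assumes "\<forall>j<s. i j \<ge> 1" and "group M1" and "odd (order M1)"
  defines "P \<equiv> product_group {..<s} (\<lambda>j. integer_mod_group (2 * i j)) \<times>\<times> M1"
  shows "P\<lparr>carrier := two_torsion P\<rparr> \<cong> product_group {..<s} (\<lambda>_. integer_mod_group 2)"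
proof -
  let ?T = "\<lambda>j. (integer_mod_group (2 * i j))\<lparr>carrier := two_torsion (integer_mod_group (2 * i j))\<rparr>"
  have "P\<lparr>carrier := two_torsion P\<rparr> = product_group {..<s} ?T \<times>\<times> M1\<lparr>carrier := two_torsion M1\<rparr>"
    unfolding P_def two_torsion_DirProd two_torsion_product_group ..
  also have "\<dots> \<cong> product_group {..<s} ?T"
    using group.two_torsion_odd_order[OF assms(2,3)]
    by (intro is_isoI[OF fst_iso_DirProd_trivial]) simp
  also have "\<dots> \<cong> product_group {..<s} (\<lambda>_. integer_mod_group 2)"
  proof (rule iso_product_groupI)
    fix j assume "j \<in> {..<s}"
    then have "integer_mod_group 2 \<cong> ?T j"
      using assms(1) by (simp add: iso_integer_mod_group_2_two_torsion)
    then show "?T j \<cong> integer_mod_group 2"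
      by (rule group.iso_sym[OF group_integer_mod_group])
  qed (simp_all add: comm_group.group_two_torsion)
  finally show ?thesis .
qed

lemma iso_two_torsion_square_elementary:
  fixes M :: "('a, 'b) monoid_scheme" and M1 :: "('c, 'd) monoid_scheme"
    and s :: nat and i :: "nat \<Rightarrow> nat"
  assumes "comm_group M" and "\<forall>j<s. i j \<ge> 1" and "group M1" and "odd (order M1)"
    and "M \<cong> product_group {..<s} (\<lambda>j. integer_mod_group (2 * i j)) \<times>\<times> M1"
  shows "M\<lparr>carrier := two_torsion M\<rparr> \<times>\<times> M\<lparr>carrier := two_torsion M\<rparr>
           \<cong> product_group {..<2 * s} (\<lambda>_. integer_mod_group 2)"
proof -
  interpret M: comm_group M by fact
  let ?P = "product_group {..<s} (\<lambda>j. integer_mod_group (2 * i j)) \<times>\<times> M1"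
  let ?C = "product_group {..<s} (\<lambda>_. integer_mod_group 2)"
  have "group ?P"
    using \<open>group M1\<close> by (simp add: DirProd_group)
  then have "M\<lparr>carrier := two_torsion M\<rparr> \<cong> ?P\<lparr>carrier := two_torsion ?P\<rparr>"
    using assms(5) M.iso_two_torsion by (auto simp: is_iso_def)
  also have "\<dots> \<cong> ?C"
    using assms(2-4) by (rule iso_two_torsion_cyclic_decomposition)
  finally have iso_C: "M\<lparr>carrier := two_torsion M\<rparr> \<cong> ?C" .
  have "M\<lparr>carrier := two_torsion M\<rparr> \<times>\<times> M\<lparr>carrier := two_torsion M\<rparr> \<cong> ?C \<times>\<times> ?C"
    by (rule group.DirProd_iso_trans[OF M.group_two_torsion iso_C iso_C])
  also have "\<dots> \<cong> product_group {..<2 * s} (\<lambda>_. integer_mod_group 2)"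
    using iso_product_group_lessThan_add[where m = s and n = s] by (simp add: mult_2)
  finally show ?thesis .
qed

section \<open>Automorphism groups of magmas\<close>

lemma carrier_AutoGroup [simp]: "carrier (AutoGroup G) = auto G"
  by (simp add: AutoGroup_def)

lemma mult_AutoGroup:
  "g \<in> auto G \<Longrightarrow> f \<in> auto G \<Longrightarrow> g \<otimes>\<^bsub>AutoGroup G\<^esub> f = compose (carrier G) g f"
  by (simp add: AutoGroup_def BijGroup_def auto_def)

lemma subgroup_auto_if_mult_closed:
  assumes mult: "monoid.mult G \<in> carrier G \<rightarrow> carrier G \<rightarrow> carrier G"
  shows "subgroup (auto G) (BijGroup (carrier G))"
proof (rule subgroup.intro)
  show "auto G \<subseteq> carrier (BijGroup (carrier G))"
    by (force simp add: auto_def BijGroup_def)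
next
  fix f g assume "f \<in> auto G" "g \<in> auto G"
  then have hom: "f \<in> hom G G" "g \<in> hom G G" and bij: "f \<in> Bij (carrier G)" "g \<in> Bij (carrier G)"
    by (auto simp: auto_def)
  have "compose (carrier G) f g \<in> hom G G"
  proof (rule homI)
    fix x y assume "x \<in> carrier G" "y \<in> carrier G"
    with mult hom show "compose (carrier G) f g (x \<otimes>\<^bsub>G\<^esub> y)
        = compose (carrier G) f g x \<otimes>\<^bsub>G\<^esub> compose (carrier G) f g y"
      by (auto simp: compose_def hom_mult hom_in_carrier)
  qed (use hom in \<open>auto simp: compose_def hom_in_carrier\<close>)
  with bij show "f \<otimes>\<^bsub>BijGroup (carrier G)\<^esub> g \<in> auto G"
    by (simp add: BijGroup_def auto_def compose_Bij)
next
  show "\<one>\<^bsub>BijGroup (carrier G)\<^esub> \<in> auto G"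
    using mult by (auto simp: BijGroup_def auto_def hom_def id_Bij)
next
  fix f assume f: "f \<in> auto G"
  then have "(\<lambda>x \<in> carrier G. inv_into (carrier G) f x) \<in> hom G G"
    using mult by (auto simp: auto_def hom_def Bij_inv_into_mem Bij_inv_into_lemma)
  with f show "inv\<^bsub>BijGroup (carrier G)\<^esub> f \<in> auto G"
    by (simp del: restrict_apply add: inv_BijGroup auto_def restrict_inv_into_Bij)
qed

lemma group_AutoGroup_if_mult_closed:
  "monoid.mult G \<in> carrier G \<rightarrow> carrier G \<rightarrow> carrier G \<Longrightarrow> group (AutoGroup G)"
  unfolding AutoGroup_def
  by (rule subgroup.subgroup_is_group[OF subgroup_auto_if_mult_closed group_BijGroup])

section \<open>The loop \<open>L\<^sub>M\<close> and the maps \<open>F\<^sup>+\<close>\<close>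

context comm_group
begin

abbreviation L where "L \<equiv> L_grp G"

lemma carrier_L [simp]: "carrier L = UNIV \<times> carrier G"
  and mult_L [simp]:
    "(A, x) \<otimes>\<^bsub>L\<^esub> (B, y) = (klein_mult A B, if B = K1 then x \<otimes> y else inv x \<otimes> y)"
  and one_L [simp]: "\<one>\<^bsub>L\<^esub> = (K1, \<one>)"
  by (simp_all add: L_grp_def)

lemma fst_mult_L [simp]: "fst (p \<otimes>\<^bsub>L\<^esub> q) = klein_mult (fst p) (fst q)"
  by (simp add: L_grp_def split: prod.splits)

lemma mult_K1_L [simp]: "p \<otimes>\<^bsub>L\<^esub> (K1, y) = (fst p, snd p \<otimes> y)"
  by (simp add: L_grp_def split: prod.splits)

lemma snd_mult_L: "fst q \<noteq> K1 \<Longrightarrow> snd (p \<otimes>\<^bsub>L\<^esub> q) = inv (snd p) \<otimes> snd q"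
  by (cases p; cases q) simp

lemma L_mult_closed: "monoid.mult L \<in> carrier L \<rightarrow> carrier L \<rightarrow> carrier L"
  by (auto simp: L_grp_def)

lemma L_idempotent_eq_one:
  assumes "p \<in> carrier L" "p \<otimes>\<^bsub>L\<^esub> p = p"
  shows "p = \<one>\<^bsub>L\<^esub>"
proof (cases p)
  case (Pair A x)
  with assms have "A = K1" "x \<otimes> x = x" "x \<in> carrier G"
    by (auto split: if_splits)
  with Pair show ?thesis
    by (simp add: r_cancel_one)
qed

lemma L_square_eq_one_iff:
  "x \<in> carrier G \<Longrightarrow> (A, x) \<otimes>\<^bsub>L\<^esub> (A, x) = \<one>\<^bsub>L\<^esub> \<longleftrightarrow> A \<noteq> K1 \<or> x \<otimes> x = \<one>"
  by auto

lemma L_commute_K1: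
  assumes "B \<noteq> K1" "w \<in> carrier G" "y \<in> carrier G"
    and "(K1, w) \<otimes>\<^bsub>L\<^esub> (B, y) = (B, y) \<otimes>\<^bsub>L\<^esub> (K1, w)"
  shows "w \<otimes> w = \<one>"
proof -
  have "inv w \<otimes> y = w \<otimes> y"
    using assms by (simp add: m_comm)
  then have "inv w = w"
    using assms by simp
  then show ?thesis
    using assms(2) by (metis r_inv)
qed

lemma alpha_closed [simp]: "u \<in> carrier G \<Longrightarrow> v \<in> carrier G \<Longrightarrow> alpha G u v A \<in> carrier G"
  by (cases A) auto

lemma alpha_one_one [simp]: "alpha G \<one> \<one> A = \<one>"
  by (cases A) auto

lemma alpha_mult_params:
  assumes "u \<in> carrier G" "v \<in> carrier G" "u' \<in> carrier G" "v' \<in> carrier G"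
  shows "alpha G (u \<otimes> u') (v \<otimes> v') A = alpha G u v A \<otimes> alpha G u' v' A"
  using assms by (cases A) (simp_all add: m_ac)

lemma alpha_two_torsion:
  "u \<in> two_torsion G \<Longrightarrow> v \<in> two_torsion G \<Longrightarrow> alpha G u v A \<in> two_torsion G"
  using subgroup.m_closed[OF subgroup_two_torsion] subgroup.one_closed[OF subgroup_two_torsion]
  by (cases A) auto

lemma alpha_klein_mult:
  assumes "u \<in> two_torsion G" "v \<in> two_torsion G"
  shows "alpha G u v (klein_mult A B) = alpha G u v A \<otimes> alpha G u v B"
proof -
  have cancel: "w \<otimes> (w \<otimes> y) = y" if "w \<in> two_torsion G" "y \<in> carrier G" for w y
    using that by (simp add: two_torsion_def flip: m_assoc)
  from assms show ?thesis
    using cancel[OF assms(1)] cancel[OF assms(2)] unfolding two_torsion_def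
    by (cases A; cases B) (simp_all add: m_assoc m_lcomm[of v u] m_comm[of v u])
qed

lemma Fplus_apply [simp]:
  "x \<in> carrier G \<Longrightarrow> Fplus G f' f'' u v (A, x) = (f' A, f'' x \<otimes> alpha G u v A)"
  by (simp add: Fplus_def L_grp_def)

lemma Fplus_cong:
  "(\<And>x. x \<in> carrier G \<Longrightarrow> f'' x = g'' x) \<Longrightarrow> Fplus G f' f'' u v = Fplus G f' g'' u v"
  unfolding Fplus_def by (rule restrict_ext) auto

text \<open>\<open>L\<^sub>M\<close> is not associative, so \<open>group.AutoGroup\<close> does not apply.\<close>

lemma group_AutoGroup_L: "group (AutoGroup L)"
  by (rule group_AutoGroup_if_mult_closed[OF L_mult_closed])

lemma Fplus_closed:
  assumes "\<And>x. x \<in> carrier G \<Longrightarrow> f'' x \<in> carrier G" "u \<in> carrier G" "v \<in> carrier G"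
    and "p \<in> carrier L"
  shows "Fplus G f' f'' u v p \<in> carrier L"
  using assms by (cases p) simp

lemma Fplus_hom:
  assumes f': "f' \<in> auto Klein" and f'': "f'' \<in> hom G G"
    and uv: "u \<in> two_torsion G" "v \<in> two_torsion G"
  shows "Fplus G f' f'' u v \<in> hom L L"
proof -
  have f'_mult: "f' (klein_mult A B) = klein_mult (f' A) (f' B)" for A B
    using f' by (auto simp: auto_def hom_def)
  have uv_carrier: "u \<in> carrier G" "v \<in> carrier G"
    using uv by (auto simp: two_torsion_def)
  interpret f'': group_hom G G f''
    using f'' by (simp add: group_hom_def group_hom_axioms_def is_group)
  let ?F = "Fplus G f' f'' u v"
  show ?thesis
  proof (rule homI)
    fix p q assume "p \<in> carrier L" "q \<in> carrier L"
    then obtain A x B y where pq: "p = (A, x)" "q = (B, y)" "x \<in> carrier G" "y \<in> carrier G"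
      by auto
    show "?F (p \<otimes>\<^bsub>L\<^esub> q) = ?F p \<otimes>\<^bsub>L\<^esub> ?F q"
    proof (cases "B = K1")
      case True
      then show ?thesis
        using pq uv_carrier auto_Klein_K1_iff[OF f', of K1] by (simp add: m_ac)
    next
      case False
      then have "f' B \<noteq> K1"
        using auto_Klein_K1_iff[OF f'] by simp
      have "?F (p \<otimes>\<^bsub>L\<^esub> q)
          = (klein_mult (f' A) (f' B), inv (f'' x) \<otimes> f'' y \<otimes> (alpha G u v A \<otimes> alpha G u v B))"
        using pq False uv_carrier by (simp add: f'_mult alpha_klein_mult[OF uv])
      also have "\<dots> = (klein_mult (f' A) (f' B),
          inv (f'' x \<otimes> alpha G u v A) \<otimes> (f'' y \<otimes> alpha G u v B))"
        using pq uv_carrier inv_two_torsion[OF alpha_two_torsion[OF uv]] by (simp add: inv_mult m_ac)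
      also have "\<dots> = ?F p \<otimes>\<^bsub>L\<^esub> ?F q"
        unfolding pq(1,2) using pq(3,4) \<open>f' B \<noteq> K1\<close> by (simp only: Fplus_apply mult_L if_False)
      finally show ?thesis .
    qed
  next
    fix p assume "p \<in> carrier L"
    then show "?F p \<in> carrier L"
      using uv_carrier by (intro Fplus_closed) simp_all
  qed
qed

lemma Fplus_bij:
  assumes f': "bij f'" and f'': "bij_betw f'' (carrier G) (carrier G)"
    and uv: "u \<in> carrier G" "v \<in> carrier G"
  shows "bij_betw (Fplus G f' f'' u v) (carrier L) (carrier L)"
proof (rule bij_betw_imageI)
  let ?F = "Fplus G f' f'' u v"
  have f''_closed: "f'' x \<in> carrier G" if "x \<in> carrier G" for x
    using f'' that by (auto simp: bij_betw_def)
  show "inj_on ?F (carrier L)"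
  proof (rule inj_onI)
    fix p q assume "p \<in> carrier L" "q \<in> carrier L" and eq: "?F p = ?F q"
    then obtain A x B y where pq: "p = (A, x)" "q = (B, y)" "x \<in> carrier G" "y \<in> carrier G"
      by auto
    then have "f' A = f' B" and eq2: "f'' x \<otimes> alpha G u v A = f'' y \<otimes> alpha G u v B"
      using eq by simp_all
    then have "A = B"
      using f' by (simp add: bij_def inj_eq)
    with eq2 have "f'' x = f'' y"
      using pq uv f''_closed by simp
    then have "x = y"
      using f'' pq by (auto simp: bij_betw_def dest: inj_onD)
    with pq \<open>A = B\<close> show "p = q"
      by simp
  qed
  show "?F ` carrier L = carrier L"
  proof
    show "carrier L \<subseteq> ?F ` carrier L"
    proof
      fix p assume "p \<in> carrier L"
      then obtain B y where p: "p = (B, y)" and y: "y \<in> carrier G"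
        by auto
      obtain A where A: "f' A = B"
        using f' by (metis bij_pointE)
      have "y \<otimes> inv (alpha G u v A) \<in> f'' ` carrier G"
        using f'' y uv by (simp add: bij_betw_def)
      then obtain x where x: "x \<in> carrier G" "f'' x = y \<otimes> inv (alpha G u v A)"
        by auto
      then have "p = ?F (A, x)"
        using A p y uv by (simp add: m_assoc)
      moreover have "(A, x) \<in> carrier L"
        using x(1) by simp
      ultimately show "p \<in> ?F ` carrier L"
        by blast
    qed
    show "?F ` carrier L \<subseteq> carrier L"
      by (rule image_subsetI) (rule Fplus_closed[OF f''_closed uv])
  qed
qed

lemma Fplus_in_auto:
  assumes f': "f' \<in> auto Klein" and f'': "f'' \<in> auto G"
    and uv: "u \<in> two_torsion G" "v \<in> two_torsion G"
  shows "Fplus G f' f'' u v \<in> auto L"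
proof -
  have "Fplus G f' f'' u v \<in> hom L L"
    using f'' by (intro Fplus_hom f' uv) (simp add: auto_def)
  moreover have "bij_betw (Fplus G f' f'' u v) (carrier L) (carrier L)"
    using f' f'' uv by (intro Fplus_bij) (auto simp: auto_def Bij_def two_torsion_def)
  moreover have "Fplus G f' f'' u v \<in> extensional (carrier L)"
    by (simp add: Fplus_def)
  ultimately show ?thesis
    by (simp add: auto_def Bij_def)
qed

lemma compose_Fplus_one_one:
  assumes "f'' ` carrier G \<subseteq> carrier G"
  shows "compose (carrier L) (Fplus G g' g'' \<one> \<one>) (Fplus G f' f'' \<one> \<one>)
           = Fplus G (g' \<circ> f') (g'' \<circ> f'') \<one> \<one>"
  using assms by (auto simp: compose_def Fplus_def L_grp_def fun_eq_iff image_subset_iff)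

lemma compose_Fplus_id:
  assumes "u \<in> carrier G" "v \<in> carrier G" "u' \<in> carrier G" "v' \<in> carrier G"
  shows "compose (carrier L) (Fplus G id id u v) (Fplus G id id u' v')
           = Fplus G id id (u' \<otimes> u) (v' \<otimes> v)"
  using assms by (auto simp: compose_def Fplus_def L_grp_def fun_eq_iff alpha_mult_params m_assoc)

lemma klein_cocycle_eq_alpha:
  assumes closed: "\<And>A. \<beta> A \<in> carrier G" and one: "\<beta> K1 = \<one>"
    and twisted: "\<And>A B. B \<noteq> K1 \<Longrightarrow> \<beta> (klein_mult A B) = inv (\<beta> A) \<otimes> \<beta> B"
  shows "\<beta> Ka \<in> two_torsion G" "\<beta> Kb \<in> two_torsion G" "\<beta> = alpha G (\<beta> Ka) (\<beta> Kb)"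
proof -
  let ?a = "\<beta> Ka" and ?b = "\<beta> Kb"
  have a: "?a \<in> carrier G" and b: "?b \<in> carrier G"
    by (rule closed)+
  have c: "\<beta> Kc = inv ?a \<otimes> ?b"
    using twisted[where A = Ka and B = Kb] by simp
  have "?a = inv ?b \<otimes> \<beta> Kc"
    using twisted[where A = Kb and B = Kc] by simp
  also have "\<dots> = inv ?a"
    unfolding c using a b by (simp add: m_lcomm[of "inv ?b" "inv ?a" ?b])
  finally have inv_a: "inv ?a = ?a" ..
  have "inv ?b \<otimes> ?a = \<beta> Kc"
    using twisted[where A = Kb and B = Ka] by simp
  also have "\<dots> = ?b \<otimes> ?a"
    unfolding c inv_a using a b by (rule m_comm)
  finally have inv_b: "inv ?b = ?b"
    using a b by simp
  show "?a \<in> two_torsion G" "?b \<in> two_torsion G"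
    using a b inv_a inv_b r_inv[OF a] r_inv[OF b] by (auto simp: two_torsion_def)
  show "\<beta> = alpha G ?a ?b"
  proof
    fix A show "\<beta> A = alpha G ?a ?b A"
      using one c inv_a by (cases A) simp_all
  qed
qed

end

section \<open>Automorphisms of \<open>L\<^sub>M\<close>\<close>

definition klein_part :: "('a, 'b) monoid_scheme \<Rightarrow> (klein \<times> 'a \<Rightarrow> klein \<times> 'a) \<Rightarrow> klein \<Rightarrow> klein"
  where "klein_part G \<phi> = (\<lambda>A. fst (\<phi> (A, \<one>\<^bsub>G\<^esub>)))"

definition group_part :: "('a, 'b) monoid_scheme \<Rightarrow> (klein \<times> 'a \<Rightarrow> klein \<times> 'a) \<Rightarrow> 'a \<Rightarrow> 'a"
  where "group_part G \<phi> = (\<lambda>x \<in> carrier G. snd (\<phi> (K1, x)))"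

locale non_elementary_comm_group = comm_group +
  assumes non_elementary: "two_torsion G \<noteq> carrier G"

locale L_automorphism = non_elementary_comm_group +
  fixes \<phi>
  assumes auto: "\<phi> \<in> auto (L_grp G)"
begin

lemma map_closed: "p \<in> carrier L \<Longrightarrow> \<phi> p \<in> carrier L"
  and map_mult: "p \<in> carrier L \<Longrightarrow> q \<in> carrier L \<Longrightarrow> \<phi> (p \<otimes>\<^bsub>L\<^esub> q) = \<phi> p \<otimes>\<^bsub>L\<^esub> \<phi> q"
  and map_inj_on: "inj_on \<phi> (carrier L)"
  and map_surj: "\<phi> ` carrier L = carrier L"
  using auto by (auto simp: auto_def hom_def Bij_def bij_betw_def simp del: carrier_L)

lemma snd_closed: "x \<in> carrier G \<Longrightarrow> snd (\<phi> (A, x)) \<in> carrier G"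
  using map_closed[of "(A, x)"] by (auto simp: mem_Times_iff)

lemma map_one: "\<phi> (K1, \<one>) = (K1, \<one>)"
proof -
  have "\<phi> (K1, \<one>) = \<phi> ((K1, \<one>) \<otimes>\<^bsub>L\<^esub> (K1, \<one>))"
    by simp
  also have "\<dots> = \<phi> (K1, \<one>) \<otimes>\<^bsub>L\<^esub> \<phi> (K1, \<one>)"
    by (rule map_mult) simp_all
  finally have "\<phi> (K1, \<one>) \<otimes>\<^bsub>L\<^esub> \<phi> (K1, \<one>) = \<phi> (K1, \<one>)" ..
  from L_idempotent_eq_one[OF map_closed this] show ?thesis
    by simp
qed

lemma square_eq_one_iff:
  assumes "p \<in> carrier L"
  shows "\<phi> p \<otimes>\<^bsub>L\<^esub> \<phi> p = \<one>\<^bsub>L\<^esub> \<longleftrightarrow> p \<otimes>\<^bsub>L\<^esub> p = \<one>\<^bsub>L\<^esub>"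
proof -
  have "p \<otimes>\<^bsub>L\<^esub> p \<in> carrier L"
    using assms L_mult_closed by blast
  have "\<phi> p \<otimes>\<^bsub>L\<^esub> \<phi> p = \<one>\<^bsub>L\<^esub> \<longleftrightarrow> \<phi> (p \<otimes>\<^bsub>L\<^esub> p) = \<phi> \<one>\<^bsub>L\<^esub>"
    using map_one map_mult[OF assms assms] by simp
  also have "\<dots> \<longleftrightarrow> p \<otimes>\<^bsub>L\<^esub> p = \<one>\<^bsub>L\<^esub>"
    using inj_on_eq_iff[OF map_inj_on] \<open>p \<otimes>\<^bsub>L\<^esub> p \<in> carrier L\<close> by simp
  finally show ?thesis .
qed

lemma fst_K1:
  assumes x: "x \<in> carrier G"
  shows "fst (\<phi> (K1, x)) = K1"
proof -
  obtain m where m: "m \<in> carrier G" "m \<otimes> m \<noteq> \<one>"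
    using non_elementary by (auto simp: two_torsion_def)
  obtain P w where Pw: "\<phi> (K1, m) = (P, w)" and w: "w \<in> carrier G"
    using snd_closed[OF m(1)] by (metis prod.collapse)
  have "\<not> (P \<noteq> K1 \<or> w \<otimes> w = \<one>)"
    using square_eq_one_iff[of "(K1, m)"] m Pw w by (simp only: L_square_eq_one_iff) simp
  then have "P = K1" and w_sq: "w \<otimes> w \<noteq> \<one>"
    by auto
  obtain B y where By: "\<phi> (K1, x) = (B, y)" and y: "y \<in> carrier G"
    using snd_closed[OF x] by (metis prod.collapse)
  have "\<phi> (K1, m) \<otimes>\<^bsub>L\<^esub> \<phi> (K1, x) = \<phi> (K1, x) \<otimes>\<^bsub>L\<^esub> \<phi> (K1, m)"
    using map_mult[of "(K1, m)" "(K1, x)"] map_mult[of "(K1, x)" "(K1, m)"] m x by (simp add: m_comm)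
  then have "B \<noteq> K1 \<Longrightarrow> w \<otimes> w = \<one>"
    using L_commute_K1[of B w y] Pw \<open>P = K1\<close> By w y by simp
  then show ?thesis
    using By w_sq by auto
qed

lemma map_K1: "x \<in> carrier G \<Longrightarrow> \<phi> (K1, x) = (K1, group_part G \<phi> x)"
  using fst_K1 by (simp add: group_part_def prod_eq_iff)

lemma map_split:
  assumes "x \<in> carrier G"
  shows "\<phi> (A, x) = (klein_part G \<phi> A, snd (\<phi> (A, \<one>)) \<otimes> group_part G \<phi> x)"
proof -
  have "\<phi> (A, x) = \<phi> ((A, \<one>) \<otimes>\<^bsub>L\<^esub> (K1, x))"
    using assms by simp
  also have "\<dots> = \<phi> (A, \<one>) \<otimes>\<^bsub>L\<^esub> (K1, group_part G \<phi> x)"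
    using assms map_mult[of "(A, \<one>)" "(K1, x)"] map_K1 by simp
  finally show ?thesis
    by (simp add: klein_part_def prod_eq_iff)
qed

lemma fst_map: "y \<in> carrier G \<Longrightarrow> fst (\<phi> (B, y)) = klein_part G \<phi> B"
  by (simp add: map_split[of y B])

lemma klein_part_in_auto: "klein_part G \<phi> \<in> auto Klein"
proof -
  have hom: "klein_part G \<phi> (klein_mult A B) = klein_mult (klein_part G \<phi> A) (klein_part G \<phi> B)" for A B
  proof -
    have "\<phi> (klein_mult A B, \<one>) = \<phi> (A, \<one>) \<otimes>\<^bsub>L\<^esub> \<phi> (B, \<one>)"
      using map_mult[of "(A, \<one>)" "(B, \<one>)"] by (simp cong: if_cong)
    then show ?thesis
      by (simp add: klein_part_def)
  qed
  have "surj (klein_part G \<phi>)"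
    unfolding surj_def
  proof
    fix B
    have "(B, \<one>) \<in> \<phi> ` carrier L"
      using map_surj by simp
    then obtain A x where "x \<in> carrier G" "\<phi> (A, x) = (B, \<one>)"
      by auto
    then show "\<exists>A. B = klein_part G \<phi> A"
      using map_split by (metis fst_conv)
  qed
  then have "bij (klein_part G \<phi>)"
    by (simp add: bij_def finite_UNIV_surj_inj)
  with hom show ?thesis
    by (simp add: auto_def hom_def Bij_def bij_def)
qed

lemma group_part_in_auto: "group_part G \<phi> \<in> auto G"
proof -
  have gp_closed: "group_part G \<phi> x \<in> carrier G" if "x \<in> carrier G" for x
    using that snd_closed by (simp add: group_part_def)
  have "group_part G \<phi> \<in> hom G G"
  proof (rule homI)
    fix x y assume xy: "x \<in> carrier G" "y \<in> carrier G"
    have "(K1, group_part G \<phi> (x \<otimes> y)) = \<phi> ((K1, x) \<otimes>\<^bsub>L\<^esub> (K1, y))"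
      using xy map_K1 by simp
    also have "\<dots> = (K1, group_part G \<phi> x \<otimes> group_part G \<phi> y)"
      using xy map_mult[of "(K1, x)" "(K1, y)"] map_K1 by simp
    finally show "group_part G \<phi> (x \<otimes> y) = group_part G \<phi> x \<otimes> group_part G \<phi> y"
      by simp
  qed (rule gp_closed)
  moreover have "inj_on (group_part G \<phi>) (carrier G)"
  proof (rule inj_onI)
    fix x y assume "x \<in> carrier G" "y \<in> carrier G" "group_part G \<phi> x = group_part G \<phi> y"
    then have "\<phi> (K1, x) = \<phi> (K1, y)"
      using map_K1 by simp
    with \<open>x \<in> carrier G\<close> \<open>y \<in> carrier G\<close> show "x = y"
      using map_inj_on by (auto dest: inj_onD)
  qed
  moreover have "carrier G \<subseteq> group_part G \<phi> ` carrier G"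
  proof
    fix y assume "y \<in> carrier G"
    then have "(K1, y) \<in> \<phi> ` carrier L"
      using map_surj by simp
    then obtain A x where x: "x \<in> carrier G" and Ax: "\<phi> (A, x) = (K1, y)"
      by auto
    then have "klein_part G \<phi> A = K1"
      using map_split[OF x] by simp
    then have "A = K1"
      using auto_Klein_K1_iff[OF klein_part_in_auto] by simp
    with x Ax show "y \<in> group_part G \<phi> ` carrier G"
      using map_K1 by force
  qed
  ultimately show ?thesis
    using gp_closed by (auto simp: auto_def Bij_def bij_betw_def group_part_def)
qed

lemma offset:
  shows "snd (\<phi> (Ka, \<one>)) \<in> two_torsion G" "snd (\<phi> (Kb, \<one>)) \<in> two_torsion G"
    and "snd (\<phi> (A, \<one>)) = alpha G (snd (\<phi> (Ka, \<one>))) (snd (\<phi> (Kb, \<one>))) A"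
proof -
  have "snd (\<phi> (klein_mult A B, \<one>)) = inv (snd (\<phi> (A, \<one>))) \<otimes> snd (\<phi> (B, \<one>))"
    if "B \<noteq> K1" for A B
  proof -
    have "klein_part G \<phi> B \<noteq> K1"
      using that auto_Klein_K1_iff[OF klein_part_in_auto] by simp
    moreover have "\<phi> (klein_mult A B, \<one>) = \<phi> (A, \<one>) \<otimes>\<^bsub>L\<^esub> \<phi> (B, \<one>)"
      using that map_mult[of "(A, \<one>)" "(B, \<one>)"] by simp
    ultimately show ?thesis
      by (simp add: snd_mult_L klein_part_def)
  qed
  then have "snd (\<phi> (Ka, \<one>)) \<in> two_torsion G \<and> snd (\<phi> (Kb, \<one>)) \<in> two_torsion G
      \<and> (\<lambda>A. snd (\<phi> (A, \<one>))) = alpha G (snd (\<phi> (Ka, \<one>))) (snd (\<phi> (Kb, \<one>)))"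
    using klein_cocycle_eq_alpha[of "\<lambda>A. snd (\<phi> (A, \<one>))"] snd_closed map_one by simp
  then show "snd (\<phi> (Ka, \<one>)) \<in> two_torsion G" "snd (\<phi> (Kb, \<one>)) \<in> two_torsion G"
    and "snd (\<phi> (A, \<one>)) = alpha G (snd (\<phi> (Ka, \<one>))) (snd (\<phi> (Kb, \<one>))) A"
    by (auto dest: fun_cong)
qed

lemma eq_Fplus:
  "\<phi> = Fplus G (klein_part G \<phi>) (group_part G \<phi>) (snd (\<phi> (Ka, \<one>))) (snd (\<phi> (Kb, \<one>)))"
proof
  fix p show "\<phi> p = Fplus G (klein_part G \<phi>) (group_part G \<phi>) (snd (\<phi> (Ka, \<one>))) (snd (\<phi> (Kb, \<one>))) p"
  proof (cases "p \<in> carrier L")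
    case True
    then obtain A x where "p = (A, x)" and x: "x \<in> carrier G"
      by auto
    have "\<phi> p = (klein_part G \<phi> A, snd (\<phi> (A, \<one>)) \<otimes> group_part G \<phi> x)"
      using \<open>p = (A, x)\<close> map_split[OF x] by simp
    also have "\<dots> = (klein_part G \<phi> A, group_part G \<phi> x \<otimes> snd (\<phi> (A, \<one>)))"
      using x snd_closed by (simp add: group_part_def m_comm)
    also have "\<dots> = Fplus G (klein_part G \<phi>) (group_part G \<phi>) (snd (\<phi> (Ka, \<one>))) (snd (\<phi> (Kb, \<one>))) p"
      using \<open>p = (A, x)\<close> x offset(3)[of A] by simp
    finally show ?thesis .
  next
    case False
    have "\<phi> \<in> extensional (carrier L)"
      using auto by (simp add: auto_def Bij_def del: carrier_L)
    with False show ?thesis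
      by (simp add: Fplus_def extensional_arb[OF _ False] del: carrier_L)
  qed
qed

end

section \<open>The decomposition of \<open>Aut(L\<^sub>M)\<close>\<close>

definition untwist :: "('a, 'b) monoid_scheme \<Rightarrow> (klein \<times> 'a \<Rightarrow> klein \<times> 'a) \<Rightarrow> klein \<times> 'a \<Rightarrow> klein \<times> 'a"
  where "untwist G \<phi> = Fplus G (klein_part G \<phi>) (group_part G \<phi>) \<one>\<^bsub>G\<^esub> \<one>\<^bsub>G\<^esub>"

definition untwisted_auts :: "('a, 'b) monoid_scheme \<Rightarrow> (klein \<times> 'a \<Rightarrow> klein \<times> 'a) set"
  where "untwisted_auts G = {Fplus G f' f'' \<one>\<^bsub>G\<^esub> \<one>\<^bsub>G\<^esub> | f' f''. f' \<in> auto Klein \<and> f'' \<in> auto G}"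

definition translation_auts :: "('a, 'b) monoid_scheme \<Rightarrow> (klein \<times> 'a \<Rightarrow> klein \<times> 'a) set"
  where "translation_auts G = {Fplus G id id x y | x y. x \<in> two_torsion G \<and> y \<in> two_torsion G}"

context comm_group
begin

lemma untwist_Fplus:
  assumes "\<And>x. x \<in> carrier G \<Longrightarrow> f'' x \<in> carrier G"
  shows "untwist G (Fplus G f' f'' u v) = Fplus G f' f'' \<one> \<one>"
proof -
  have "klein_part G (Fplus G f' f'' u v) = f'"
    by (simp add: klein_part_def fun_eq_iff)
  moreover have "group_part G (Fplus G f' f'' u v) x = f'' x" if "x \<in> carrier G" for x
    using that assms by (simp add: group_part_def)
  ultimately show ?thesis
    unfolding untwist_def by (metis Fplus_cong)
qed

lemma Fplus_id_one_one: "Fplus G id id \<one> \<one> = (\<lambda>p \<in> carrier L. p)"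
  unfolding Fplus_def by (rule restrict_ext) auto

lemma untwisted_auts_subset: "untwisted_auts G \<subseteq> auto L"
  using Fplus_in_auto[of _ _ \<one> \<one>] subgroup.one_closed[OF subgroup_two_torsion]
  by (auto simp: untwisted_auts_def)

lemma translation_auts_eq:
  "translation_auts G
     = {Fplus G id (\<lambda>x \<in> carrier G. x) x y | x y. x \<in> two_torsion G \<and> y \<in> two_torsion G}"
  by (simp add: translation_auts_def Fplus_cong[of id "\<lambda>x \<in> carrier G. x"])

lemma translation_auts_subset: "translation_auts G \<subseteq> auto L"
  unfolding translation_auts_eq using Fplus_in_auto[OF id_in_auto_Klein id_in_auto] by blast

lemma iso_translation_auts:
  "(AutoGroup L)\<lparr>carrier := translation_auts G\<rparr>
     \<cong> G\<lparr>carrier := two_torsion G\<rparr> \<times>\<times> G\<lparr>carrier := two_torsion G\<rparr>"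
proof -
  let ?H = "G\<lparr>carrier := two_torsion G\<rparr> \<times>\<times> G\<lparr>carrier := two_torsion G\<rparr>"
  let ?\<tau> = "\<lambda>(x, y). Fplus G id id x y"
  have T_carrier: "two_torsion G \<subseteq> carrier G"
    by (auto simp: two_torsion_def)
  have "?\<tau> \<in> iso ?H ((AutoGroup L)\<lparr>carrier := translation_auts G\<rparr>)"
  proof (rule isoI)
    show "?\<tau> \<in> hom ?H ((AutoGroup L)\<lparr>carrier := translation_auts G\<rparr>)"
    proof (rule homI)
      fix p q assume "p \<in> carrier ?H" "q \<in> carrier ?H"
      then obtain x y x' y' where pq: "p = (x, y)" "q = (x', y')"
        and T: "x \<in> two_torsion G" "y \<in> two_torsion G" "x' \<in> two_torsion G" "y' \<in> two_torsion G"
        by auto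
      then have "Fplus G id id x y \<in> auto L" "Fplus G id id x' y' \<in> auto L"
        using translation_auts_subset by (auto simp: translation_auts_def)
      then have "?\<tau> p \<otimes>\<^bsub>(AutoGroup L)\<lparr>carrier := translation_auts G\<rparr>\<^esub> ?\<tau> q
          = compose (carrier L) (Fplus G id id x y) (Fplus G id id x' y')"
        using pq by (simp add: mult_AutoGroup del: carrier_L)
      also have "\<dots> = Fplus G id id (x' \<otimes> x) (y' \<otimes> y)"
        using T T_carrier by (intro compose_Fplus_id) auto
      also have "\<dots> = ?\<tau> (p \<otimes>\<^bsub>?H\<^esub> q)"
      proof -
        have "x \<in> carrier G" "x' \<in> carrier G" "y \<in> carrier G" "y' \<in> carrier G"
          using T T_carrier by auto
        then show ?thesis
          using pq by (simp add: m_comm)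
      qed
      finally show "?\<tau> (p \<otimes>\<^bsub>?H\<^esub> q) = ?\<tau> p \<otimes>\<^bsub>(AutoGroup L)\<lparr>carrier := translation_auts G\<rparr>\<^esub> ?\<tau> q"
        ..
    qed (auto simp: translation_auts_def)
    show "bij_betw ?\<tau> (carrier ?H) (carrier ((AutoGroup L)\<lparr>carrier := translation_auts G\<rparr>))"
    proof (rule bij_betw_imageI)
      show "inj_on ?\<tau> (carrier ?H)"
      proof (rule inj_onI)
        fix p q assume p: "p \<in> carrier ?H" and q: "q \<in> carrier ?H" and eq: "?\<tau> p = ?\<tau> q"
        from p q obtain x y x' y' where pq: "p = (x, y)" "q = (x', y')"
          and T: "x \<in> two_torsion G" "y \<in> two_torsion G" "x' \<in> two_torsion G" "y' \<in> two_torsion G"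
          by auto
        then have xy: "x \<in> carrier G" "y \<in> carrier G" "x' \<in> carrier G" "y' \<in> carrier G"
          using T_carrier by blast+
        from eq pq have "Fplus G id id x y = Fplus G id id x' y'"
          by simp
        from fun_cong[OF this, of "(Ka, \<one>)"] fun_cong[OF this, of "(Kb, \<one>)"] show "p = q"
          using pq xy by simp
      qed
    qed (auto simp: translation_auts_def)
  qed
  then show ?thesis
    using group.iso_sym[OF DirProd_group[OF group_two_torsion group_two_torsion]] is_isoI by blast
qed

end

context non_elementary_comm_group
begin

lemma L_automorphismI: "\<phi> \<in> auto L \<Longrightarrow> L_automorphism G \<phi>"
  by unfold_locales

lemma untwist_in_untwisted_auts:
  assumes "\<phi> \<in> auto L"
  shows "untwist G \<phi> \<in> untwisted_auts G"
proof -
  interpret L_automorphism G \<phi>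
    using assms by (rule L_automorphismI)
  show ?thesis
    unfolding untwist_def untwisted_auts_def using klein_part_in_auto group_part_in_auto by blast
qed

lemma untwist_untwisted_auts: "F \<in> untwisted_auts G \<Longrightarrow> untwist G F = F"
  by (auto simp: untwisted_auts_def auto_def hom_def intro!: untwist_Fplus)

lemma image_untwist: "untwist G ` auto L = untwisted_auts G"
  using untwist_in_untwisted_auts untwist_untwisted_auts untwisted_auts_subset
  by (auto simp: image_iff) (metis subsetD)

lemma untwist_compose:
  assumes g: "g \<in> auto L" and f: "f \<in> auto L"
  shows "untwist G (compose (carrier L) g f) = compose (carrier L) (untwist G g) (untwist G f)"
proof -
  interpret g: L_automorphism G g
    using g by (rule L_automorphismI)
  interpret f: L_automorphism G f
    using f by (rule L_automorphismI)
  have f_closed: "group_part G f x \<in> carrier G" if "x \<in> carrier G" for x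
    using that f.snd_closed by (simp add: group_part_def)
  have klein: "klein_part G (compose (carrier L) g f) = klein_part G g \<circ> klein_part G f"
  proof
    fix A
    have "klein_part G (compose (carrier L) g f) A = fst (g (f (A, \<one>)))"
      by (simp add: klein_part_def compose_def)
    also have "\<dots> = fst (g (klein_part G f A, snd (f (A, \<one>))))"
      by (simp add: klein_part_def)
    also have "\<dots> = klein_part G g (klein_part G f A)"
      using f.snd_closed by (rule g.fst_map) simp
    finally show "klein_part G (compose (carrier L) g f) A = (klein_part G g \<circ> klein_part G f) A"
      by simp
  qed
  have group: "group_part G (compose (carrier L) g f) x = (group_part G g \<circ> group_part G f) x"
    if x: "x \<in> carrier G" for x
  proof -
    have "group_part G (compose (carrier L) g f) x = snd (g (f (K1, x)))"
      using x by (simp add: group_part_def compose_def)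
    also have "\<dots> = group_part G g (group_part G f x)"
      using x f_closed[OF x] by (simp only: f.map_K1 g.map_K1 snd_conv)
    finally show ?thesis
      by simp
  qed
  have "untwist G (compose (carrier L) g f)
      = Fplus G (klein_part G g \<circ> klein_part G f) (group_part G g \<circ> group_part G f) \<one> \<one>"
    unfolding untwist_def klein by (rule Fplus_cong) (rule group)
  also have "\<dots> = compose (carrier L) (untwist G g) (untwist G f)"
    unfolding untwist_def using f_closed by (intro compose_Fplus_one_one [symmetric]) blast
  finally show ?thesis .
qed

lemma untwist_hom: "untwist G \<in> hom (AutoGroup L) (AutoGroup L)"
proof (rule homI)
  fix \<phi> assume "\<phi> \<in> carrier (AutoGroup L)"
  then show "untwist G \<phi> \<in> carrier (AutoGroup L)"
    using untwist_in_untwisted_auts untwisted_auts_subset by auto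
next
  fix g f assume g: "g \<in> carrier (AutoGroup L)" and f: "f \<in> carrier (AutoGroup L)"
  then have "untwist G g \<in> auto L" "untwist G f \<in> auto L"
    using untwist_in_untwisted_auts untwisted_auts_subset by auto
  with g f show "untwist G (g \<otimes>\<^bsub>AutoGroup L\<^esub> f) = untwist G g \<otimes>\<^bsub>AutoGroup L\<^esub> untwist G f"
    by (simp add: mult_AutoGroup untwist_compose del: carrier_L)
qed

lemma group_hom_untwist:
  "group_hom (AutoGroup L) ((AutoGroup L)\<lparr>carrier := untwisted_auts G\<rparr>) (untwist G)"
proof -
  interpret Aut: group "AutoGroup L"
    by (rule group_AutoGroup_L)
  have "subgroup (untwisted_auts G) (AutoGroup L)"
    using group_hom.img_is_subgroup[of "AutoGroup L" "AutoGroup L" "untwist G"] untwist_hom image_untwist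
    by (simp add: group_hom_def group_hom_axioms_def Aut.is_group)
  then have "group ((AutoGroup L)\<lparr>carrier := untwisted_auts G\<rparr>)"
    by (rule Aut.subgroup_imp_group)
  moreover have "untwist G \<in> hom (AutoGroup L) ((AutoGroup L)\<lparr>carrier := untwisted_auts G\<rparr>)"
    using untwist_hom untwist_in_untwisted_auts by (auto simp: hom_def)
  ultimately show ?thesis
    by (simp add: group_hom_def group_hom_axioms_def Aut.is_group)
qed

lemma kernel_untwist:
  "kernel (AutoGroup L) ((AutoGroup L)\<lparr>carrier := untwisted_auts G\<rparr>) (untwist G) = translation_auts G"
proof
  show "kernel (AutoGroup L) ((AutoGroup L)\<lparr>carrier := untwisted_auts G\<rparr>) (untwist G)
          \<subseteq> translation_auts G"
  proof
    fix \<phi> assume "\<phi> \<in> kernel (AutoGroup L) ((AutoGroup L)\<lparr>carrier := untwisted_auts G\<rparr>) (untwist G)"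
    then have \<phi>: "\<phi> \<in> auto L" and trivial: "untwist G \<phi> = (\<lambda>p \<in> carrier L. p)"
      by (auto simp: kernel_def AutoGroup_def BijGroup_def)
    interpret L_automorphism G \<phi>
      using \<phi> by (rule L_automorphismI)
    have group_part_closed: "group_part G \<phi> x \<in> carrier G" if "x \<in> carrier G" for x
      using that snd_closed by (simp add: group_part_def)
    have "klein_part G \<phi> A = A" for A
      using fun_cong[OF trivial, of "(A, \<one>)"] group_part_closed[of \<one>] by (simp add: untwist_def)
    moreover have "group_part G \<phi> x = x" if "x \<in> carrier G" for x
      using fun_cong[OF trivial, of "(K1, x)"] group_part_closed[OF that] that by (simp add: untwist_def)
    ultimately have "\<phi> = Fplus G id id (snd (\<phi> (Ka, \<one>))) (snd (\<phi> (Kb, \<one>)))"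
      using eq_Fplus by (metis Fplus_cong eq_id_iff id_apply)
    then show "\<phi> \<in> translation_auts G"
      using offset(1,2) by (auto simp: translation_auts_def)
  qed
next
  show "translation_auts G
          \<subseteq> kernel (AutoGroup L) ((AutoGroup L)\<lparr>carrier := untwisted_auts G\<rparr>) (untwist G)"
  proof
    fix \<phi> assume "\<phi> \<in> translation_auts G"
    then obtain x y where "\<phi> = Fplus G id id x y"
      by (auto simp: translation_auts_def)
    then have "untwist G \<phi> = (\<lambda>p \<in> carrier L. p)"
      by (simp add: untwist_Fplus Fplus_id_one_one)
    with \<open>\<phi> \<in> translation_auts G\<close>
    show "\<phi> \<in> kernel (AutoGroup L) ((AutoGroup L)\<lparr>carrier := untwisted_auts G\<rparr>) (untwist G)"
      using translation_auts_subset by (auto simp: kernel_def AutoGroup_def BijGroup_def)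
  qed
qed

lemma normal_translation_auts: "translation_auts G \<lhd> AutoGroup L"
  using group_hom.normal_kernel[OF group_hom_untwist] by (simp add: kernel_untwist)

lemma FactGroup_translation_auts_iso:
  "AutoGroup L Mod translation_auts G \<cong> (AutoGroup L)\<lparr>carrier := untwisted_auts G\<rparr>"
  using group_hom.FactGroup_iso[OF group_hom_untwist] by (simp add: kernel_untwist image_untwist)

end

theorem proposition5p8:
  fixes M :: "('a, 'b) monoid_scheme"
    and M1 :: "('c, 'd) monoid_scheme"
    and s :: nat and i :: "nat \<Rightarrow> nat"
  assumes "comm_group M" and "finite (carrier M)"
    and "even (order M)" and "exponent M > 2"
    and "s \<ge> 1" and "\<forall>j<s. i j \<ge> 1"
    and "group M1" and "finite (carrier M1)" and "odd (order M1)"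
    and "M \<cong> (product_group {..<s} (\<lambda>j. integer_mod_group (2 * i j)) \<times>\<times> M1)"
  defines "H \<equiv> {x \<in> carrier M. x \<otimes>\<^bsub>M\<^esub> x = \<one>\<^bsub>M\<^esub>}"
    and "\<A> \<equiv> {Fplus M f' f'' \<one>\<^bsub>M\<^esub> \<one>\<^bsub>M\<^esub> | f' f''. f' \<in> auto Klein \<and> f'' \<in> auto M}"
    and "\<B> \<equiv> {Fplus M id id x y | x y. x \<in> carrier M \<and> x \<otimes>\<^bsub>M\<^esub> x = \<one>\<^bsub>M\<^esub>
              \<and> y \<in> carrier M \<and> y \<otimes>\<^bsub>M\<^esub> y = \<one>\<^bsub>M\<^esub>}"
  shows "((AutoGroup (L_grp M))\<lparr>carrier := \<B>\<rparr> \<cong> M\<lparr>carrier := H\<rparr> \<times>\<times> M\<lparr>carrier := H\<rparr>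
          \<and> M\<lparr>carrier := H\<rparr> \<times>\<times> M\<lparr>carrier := H\<rparr>
              \<cong> product_group {..<2 * s} (\<lambda>_. integer_mod_group 2))
       \<and> \<B> \<lhd> AutoGroup (L_grp M)
       \<and> AutoGroup (L_grp M) Mod \<B> \<cong> (AutoGroup (L_grp M))\<lparr>carrier := \<A>\<rparr>"
proof -
  interpret comm_group M
    by fact
  interpret non_elementary_comm_group M
    by unfold_locales (rule two_torsion_ne_carrier[OF assms(4)])
  have "H = two_torsion M" "\<A> = untwisted_auts M" "\<B> = translation_auts M"
    by (auto simp: H_def \<A>_def \<B>_def two_torsion_def untwisted_auts_def translation_auts_def)
  then show ?thesis
    using iso_translation_auts iso_two_torsion_square_elementary[OF assms(1,6,7,9,10)]
      normal_translation_auts FactGroup_translation_auts_iso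
    by simp
qed

end
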